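(* Let $X$ be a fibrewise locally equiconnected space over $B$ and let $f:X\to[0,1]$ be a continuous map such that $A:=f^{-1}(\{0\})$ is a fibrewise retract of $f^{-1}([0,1))$. Then $(X,A)$ is a closed fibrewise cofibred pair.
   Context: A fibrewise space over $B$ is a space $X$ with $p_X:X\to B$; subsets carry the restricted projection; fibrewise maps satisfy $p_Y\circ f=p_X$. $A\subseteq V$ is a fibrewise retract of $V$ if there is a fibrewise map $r:V\to A$ with $r|_A=1_A$. A fibrewise cofibration is a fibrewise map with the homotopy extension property with respect to fibrewise maps and fibrewise homotopies (homotopies $H$ with $p(H(x,t))=p(x)$); closed if also a closed embedding. $(X,A)$ is a closed fibrewise cofibred pair if the inclusion $A\hookrightarrow X$ is a closed fibrewise cofibration. $X$ is fibrewise locally equiconnected if the diagonal $X\to X\times_BX=\{(x,y):p_X(x)=p_X(y)\}$ is a closed fibrewise cofibration. *)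

theory Defs
  imports "HOL-Analysis.Analysis"
begin

definition fibrewise_space :: "'b topology \<Rightarrow> 'a topology \<Rightarrow> ('a \<Rightarrow> 'b) \<Rightarrow> bool" where
  "fibrewise_space B X p \<longleftrightarrow> continuous_map X B p"

definition fibrewise_map ::
  "'a topology \<Rightarrow> ('a \<Rightarrow> 'b) \<Rightarrow> 'c topology \<Rightarrow> ('c \<Rightarrow> 'b) \<Rightarrow> ('a \<Rightarrow> 'c) \<Rightarrow> bool" where
  "fibrewise_map X p Y q f \<longleftrightarrow> continuous_map X Y f \<and> (\<forall>x\<in>topspace X. q (f x) = p x)"

text \<open>Fibrewise homotopy extension property of u : A -> X with respect to all fibrewise
  spaces E over B whose carrier type is 'e.\<close>

definition fibrewise_cofibration ::
  "'e itself \<Rightarrow> 'b topology \<Rightarrow> 'a topology \<Rightarrow> ('a \<Rightarrow> 'b) \<Rightarrow> 'x topology \<Rightarrow> ('x \<Rightarrow> 'b)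
    \<Rightarrow> ('a \<Rightarrow> 'x) \<Rightarrow> bool" where
  "fibrewise_cofibration (ty :: 'e itself) B A pA X pX u \<longleftrightarrow>
     fibrewise_map A pA X pX u \<and>
     (\<forall>(E :: 'e topology) q g h.
        fibrewise_space B E q \<and> fibrewise_map X pX E q g \<and>
        fibrewise_map (prod_topology A (top_of_set {0..1::real})) (\<lambda>(a,t). pA a) E q h \<and>
        (\<forall>a\<in>topspace A. h (a, 0) = g (u a))
        \<longrightarrow> (\<exists>H. fibrewise_map (prod_topology X (top_of_set {0..1::real})) (\<lambda>(x,t). pX x) E q H \<and>
                 (\<forall>x\<in>topspace X. H (x, 0) = g x) \<and>
                 (\<forall>a\<in>topspace A. \<forall>t\<in>{0..1}. H (u a, t) = h (a, t))))"

definition closed_fibrewise_cofibration ::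
  "'e itself \<Rightarrow> 'b topology \<Rightarrow> 'a topology \<Rightarrow> ('a \<Rightarrow> 'b) \<Rightarrow> 'x topology \<Rightarrow> ('x \<Rightarrow> 'b)
    \<Rightarrow> ('a \<Rightarrow> 'x) \<Rightarrow> bool" where
  "closed_fibrewise_cofibration ty B A pA X pX u \<longleftrightarrow>
     fibrewise_cofibration ty B A pA X pX u \<and>
     embedding_map A X u \<and> closedin X (u ` topspace A)"

definition fibre_product :: "'a topology \<Rightarrow> ('a \<Rightarrow> 'b) \<Rightarrow> ('a \<times> 'a) topology" where
  "fibre_product X p = subtopology (prod_topology X X) {(x,y). p x = p y}"

text \<open>Fibrewise local equiconnectedness. HEP is tested against fibrewise spaces on the type
  of the fibrewise mapping cylinder of the diagonal, which is the universal test space.\<close>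

definition fibrewise_LEC :: "'b topology \<Rightarrow> 'a topology \<Rightarrow> ('a \<Rightarrow> 'b) \<Rightarrow> bool" where
  "fibrewise_LEC B X p \<longleftrightarrow> fibrewise_space B X p \<and>
     closed_fibrewise_cofibration TYPE(('a \<times> 'a) \<times> real) B X p
        (fibre_product X p) (\<lambda>(x,y). p x) (\<lambda>x. (x, x))"

definition fibrewise_retract :: "'a topology \<Rightarrow> ('a \<Rightarrow> 'b) \<Rightarrow> 'a set \<Rightarrow> 'a set \<Rightarrow> bool" where
  "fibrewise_retract X p A V \<longleftrightarrow> A \<subseteq> V \<and>
     (\<exists>r. fibrewise_map (subtopology X V) p (subtopology X A) p r \<and> (\<forall>x\<in>A. r x = x))"

end

theory Submission
  imports Defs
begin

text \<open>Since the diagonal is a closed fibrewise cofibration, there is a fibrewise retraction \<open>R\<close>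
  of \<open>(X \<times>\<^sub>B X) \<times> I\<close> onto \<open>(X \<times>\<^sub>B X) \<times> {0} \<union> \<Delta> \<times> I\<close>. For \<open>x\<close> near \<open>A\<close>, the retraction
  moves \<open>(x, r x)\<close> into the diagonal, and its two coordinates give a fibrewise path from \<open>x\<close> to
  \<open>r x \<in> A\<close>. Damping these paths with \<open>f\<close> yields \<open>\<psi> : X \<rightarrow> [0,1]\<close> vanishing exactly on \<open>A\<close> and a
  fibrewise deformation \<open>D\<close> of \<open>X\<close> rel \<open>A\<close> with \<open>D(x,t) \<in> A\<close> for \<open>t > \<psi> x\<close>. As in Strom's
  criterion, \<open>(x,t) \<mapsto> (D(x,t), max 0 (t - \<psi> x))\<close> then retracts \<open>X \<times> I\<close> onto
  \<open>X \<times> {0} \<union> A \<times> I\<close>, which gives the fibrewise homotopy extension property.\<close>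

abbreviation II :: "real topology" where
  "II \<equiv> top_of_set {0..1}"

lemma continuous_map_comp:
  "continuous_map X Y f \<Longrightarrow> continuous_map Y Z g \<Longrightarrow> continuous_map X Z (\<lambda>x. g (f x))"
  using continuous_map_compose[of X Y f Z g] by (simp add: o_def)

lemma continuous_map_subtopology_fst_into:
  "T \<subseteq> S \<times> UNIV \<Longrightarrow> continuous_map (subtopology (prod_topology X Y) T) (subtopology X S) fst"
  using continuous_map_subtopology_fst[of X Y T] by (auto simp: continuous_map_in_subtopology)

lemma continuous_map_subtopology_snd_real:
  "continuous_map (subtopology (prod_topology X II) T) euclideanreal snd"
  by (rule continuous_map_into_fulltopology[OF continuous_map_subtopology_snd])

lemma topcontinuous_at_if_continuous_on_open:
  assumes "openin Z S" "continuous_map (subtopology Z S) Y F" "z \<in> S"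
    and "F \<in> topspace Z \<rightarrow> topspace Y"
  shows "topcontinuous_at Z Y F z"
  unfolding topcontinuous_at_def
proof (intro conjI allI impI)
  show "z \<in> topspace Z"
    using assms(1,3) openin_subset by blast
  fix N assume "openin Y N \<and> F z \<in> N"
  then have "openin (subtopology Z S) {x \<in> topspace (subtopology Z S). F x \<in> N}"
    using assms(2) openin_continuous_map_preimage by blast
  then have "openin Z {x \<in> topspace (subtopology Z S). F x \<in> N}"
    using assms(1) openin_trans_full by blast
  then show "\<exists>Q. openin Z Q \<and> z \<in> Q \<and> (\<forall>y\<in>Q. F y \<in> N)"
    using \<open>openin Y N \<and> F z \<in> N\<close> \<open>z \<in> topspace Z\<close> assms(3) by (intro exI) auto
qed (fact assms(4))

lemma continuous_map_cylinder_paste: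
  assumes A: "closedin X A" and g: "continuous_map X E g"
    and h: "continuous_map (prod_topology (subtopology X A) II) E h"
    and hg: "\<And>a. a \<in> A \<Longrightarrow> h (a,0) = g a"
  shows "continuous_map (subtopology (prod_topology X II) (topspace X \<times> {0} \<union> A \<times> {0..1})) E
           (\<lambda>u. if fst u \<in> A then h u else g (fst u))"
    (is "continuous_map ?M E ?K")
proof (rule pasting_lemma_closed[where I = "{True,False}"
      and T = "\<lambda>b. if b then A \<times> {0..1} else topspace X \<times> {0}"
      and f = "\<lambda>b. if b then h else (\<lambda>u. g (fst u))"])
  have A_sub: "A \<subseteq> topspace X" using A by (rule closedin_subset)
  fix b :: bool
  have "closedin (prod_topology X II) (A \<times> {0..1})" "closedin (prod_topology X II) (topspace X \<times> {0})"
    using A by (simp_all add: closedin_prod_Times_iff)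
  then show "closedin ?M (if b then A \<times> {0..1} else topspace X \<times> {0})"
    by (cases b) (simp_all add: closedin_subset_topspace)
  have h_cont: "continuous_map (subtopology (prod_topology X II) (A \<times> {0..1})) E h"
    using h by (simp add: prod_topology_subtopology(1))
  have g_cont: "continuous_map (subtopology (prod_topology X II) (topspace X \<times> {0})) E (\<lambda>u. g (fst u))"
    using continuous_map_subtopology_fst g by (rule continuous_map_comp)
  show "continuous_map (subtopology ?M (if b then A \<times> {0..1} else topspace X \<times> {0})) E
      (if b then h else (\<lambda>u. g (fst u)))"
  proof -
    have "(topspace X \<times> {0} \<union> A \<times> {0..1}) \<inter> (if b then A \<times> {0..1} else topspace X \<times> {0})
        = (if b then A \<times> {0..1} else topspace X \<times> {0})"
      by auto
    then show ?thesis
      using h_cont g_cont by (cases b) (simp_all add: subtopology_subtopology)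
  qed
next
  fix i j :: bool and u
  assume "u \<in> topspace ?M \<inter> (if i then A \<times> {0..1} else topspace X \<times> {0})
                          \<inter> (if j then A \<times> {0..1} else topspace X \<times> {0})"
  then show "(if i then h else (\<lambda>u. g (fst u))) u = (if j then h else (\<lambda>u. g (fst u))) u"
    using hg by (cases i; cases j; cases u) auto
next
  fix u assume "u \<in> topspace ?M"
  then show "\<exists>b. b \<in> {True, False} \<and> u \<in> (if b then A \<times> {0..1} else topspace X \<times> {0})
              \<and> ?K u = (if b then h else (\<lambda>u. g (fst u))) u"
  proof (cases "fst u \<in> A")
    case True
    then show ?thesis
      using \<open>u \<in> topspace ?M\<close> by (intro exI[of _ True]) (auto simp: mem_Times_iff)
  next
    case False
    then show ?thesis
      using \<open>u \<in> topspace ?M\<close> by (intro exI[of _ False]) (auto simp: mem_Times_iff)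
  qed
qed simp

lemma closed_fibrewise_cofibration_if_cylinder_retraction:
  fixes X :: "'a topology" and p :: "'a \<Rightarrow> 'b" and B :: "'b topology"
  assumes A: "closedin X A"
    and \<rho>_cont: "continuous_map (prod_topology X II) (prod_topology X II) \<rho>"
    and \<rho>_into: "\<And>u. u \<in> topspace (prod_topology X II) \<Longrightarrow> \<rho> u \<in> topspace X \<times> {0} \<union> A \<times> {0..1}"
    and \<rho>_bottom: "\<And>x. x \<in> topspace X \<Longrightarrow> \<rho> (x,0) = (x,0)"
    and \<rho>_A: "\<And>a t. a \<in> A \<Longrightarrow> t \<in> {0..1} \<Longrightarrow> \<rho> (a,t) = (a,t)"
    and \<rho>_fibre: "\<And>u. u \<in> topspace (prod_topology X II) \<Longrightarrow> p (fst (\<rho> u)) = p (fst u)"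
  shows "closed_fibrewise_cofibration TYPE('e) B (subtopology X A) p X p id"
proof -
  have A_sub: "A \<subseteq> topspace X" using A by (rule closedin_subset)
  then have top_A: "topspace (subtopology X A) = A" by auto
  show ?thesis
    unfolding closed_fibrewise_cofibration_def fibrewise_cofibration_def
  proof (intro conjI allI impI)
    show "fibrewise_map (subtopology X A) p X p id"
      by (simp add: fibrewise_map_def)
    show "embedding_map (subtopology X A) X id"
      using A_sub by (simp add: embedding_map_def top_A Int_absorb1)
    show "closedin X (id ` topspace (subtopology X A))"
      using A A_sub by (simp add: Int_absorb1)
    fix E :: "'e topology" and q g h
    assume "fibrewise_space B E q \<and> fibrewise_map X p E q g \<and>
      fibrewise_map (prod_topology (subtopology X A) II) (\<lambda>(a,t). p a) E q h \<and>
      (\<forall>a\<in>topspace (subtopology X A). h (a, 0) = g (id a))"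
    then have g: "continuous_map X E g" "\<And>x. x \<in> topspace X \<Longrightarrow> q (g x) = p x"
      and h: "continuous_map (prod_topology (subtopology X A) II) E h"
        "\<And>a t. a \<in> A \<Longrightarrow> t \<in> {0..1} \<Longrightarrow> q (h (a,t)) = p a"
      and hg: "\<And>a. a \<in> A \<Longrightarrow> h (a,0) = g a"
      using A_sub by (auto simp: fibrewise_map_def top_A)
    define K where "K u = (if fst u \<in> A then h u else g (fst u))" for u
    have "continuous_map (prod_topology X II)
        (subtopology (prod_topology X II) (topspace X \<times> {0} \<union> A \<times> {0..1})) \<rho>"
      using \<rho>_cont \<rho>_into by (auto simp: continuous_map_in_subtopology)
    then have H_cont: "continuous_map (prod_topology X II) E (\<lambda>u. K (\<rho> u))"
      using continuous_map_cylinder_paste[OF A g(1) h(1) hg] unfolding K_def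
      by (rule continuous_map_comp)
    have H_fibre: "q (K (\<rho> (x,t))) = p x" if "x \<in> topspace X" "t \<in> {0..1}" for x t
    proof -
      have "\<rho> (x,t) \<in> topspace X \<times> {0} \<union> A \<times> {0..1}" "p (fst (\<rho> (x,t))) = p x"
        using that \<rho>_into \<rho>_fibre by auto
      then show ?thesis
        using g(2) h(2) by (cases "\<rho> (x,t)") (auto simp: K_def)
    qed
    show "\<exists>H. fibrewise_map (prod_topology X II) (\<lambda>(x,t). p x) E q H \<and>
        (\<forall>x\<in>topspace X. H (x,0) = g x) \<and>
        (\<forall>a\<in>topspace (subtopology X A). \<forall>t\<in>{0..1}. H (id a, t) = h (a,t))"
      using H_cont H_fibre \<rho>_bottom \<rho>_A hg
      by (intro exI[of _ "\<lambda>u. K (\<rho> u)"]) (auto simp: fibrewise_map_def K_def top_A)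
  qed
qed

lemma closed_fibrewise_cofibration_if_Strom_structure:
  fixes X :: "'a topology" and p :: "'a \<Rightarrow> 'b" and B :: "'b topology"
  assumes A: "closedin X A"
    and \<psi>_cont: "continuous_map X euclideanreal \<psi>"
    and \<psi>_nonneg: "\<And>x. x \<in> topspace X \<Longrightarrow> 0 \<le> \<psi> x"
    and \<psi>_A: "\<And>a. a \<in> A \<Longrightarrow> \<psi> a = 0"
    and D_cont: "continuous_map (prod_topology X II) X D"
    and D_0: "\<And>x. x \<in> topspace X \<Longrightarrow> D (x,0) = x"
    and D_A: "\<And>a t. a \<in> A \<Longrightarrow> t \<in> {0..1} \<Longrightarrow> D (a,t) = a"
    and D_fibre: "\<And>x t. x \<in> topspace X \<Longrightarrow> t \<in> {0..1} \<Longrightarrow> p (D (x,t)) = p x"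
    and D_into_A: "\<And>x t. x \<in> topspace X \<Longrightarrow> t \<in> {0..1} \<Longrightarrow> \<psi> x < t \<Longrightarrow> D (x,t) \<in> A"
  shows "closed_fibrewise_cofibration TYPE('e) B (subtopology X A) p X p id"
proof (rule closed_fibrewise_cofibration_if_cylinder_retraction)
  define \<rho> where "\<rho> u = (D u, max 0 (snd u - \<psi> (fst u)))" for u
  have "continuous_map (prod_topology X II) euclideanreal (\<lambda>u. max 0 (snd u - \<psi> (fst u)))"
    using continuous_map_comp[OF continuous_map_fst \<psi>_cont]
      continuous_map_into_fulltopology[OF continuous_map_snd]
    by (intro continuous_intros)
  moreover have "max 0 (snd u - \<psi> (fst u)) \<in> {0..1}" if "u \<in> topspace (prod_topology X II)" for u
    using that \<psi>_nonneg[of "fst u"] by auto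
  ultimately show "continuous_map (prod_topology X II) (prod_topology X II) \<rho>"
    unfolding \<rho>_def using D_cont
    by (intro continuous_map_pairedI) (auto simp: continuous_map_in_subtopology)
  show "\<rho> u \<in> topspace X \<times> {0} \<union> A \<times> {0..1}" if u_top: "u \<in> topspace (prod_topology X II)" for u
  proof -
    obtain x t where u: "u = (x,t)" "x \<in> topspace X" "t \<in> {0..1}"
      using u_top by (cases u) auto
    have "D (x,t) \<in> topspace X"
      using continuous_map_image_subset_topspace[OF D_cont] u_top u(1) by blast
    moreover have "0 \<le> \<psi> x" using \<psi>_nonneg u(2) .
    ultimately show ?thesis
      using D_into_A[OF u(2,3)] u(3) by (cases "\<psi> x < t") (simp_all add: \<rho>_def u(1))
  qed
  show "\<rho> (x,0) = (x,0)" if "x \<in> topspace X" for x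
    using that D_0 \<psi>_nonneg by (simp add: \<rho>_def)
  show "\<rho> (a,t) = (a,t)" if "a \<in> A" "t \<in> {0..1}" for a t
    using that D_A \<psi>_A by (simp add: \<rho>_def)
  show "p (fst (\<rho> u)) = p (fst u)" if "u \<in> topspace (prod_topology X II)" for u
    using that D_fibre by (auto simp: \<rho>_def)
qed (fact A)

lemma topspace_fibre_product:
  "topspace (fibre_product X p) = {(x,y). x \<in> topspace X \<and> y \<in> topspace X \<and> p x = p y}"
  by (auto simp: fibre_product_def)

lemma continuous_map_fibre_product_fst: "continuous_map (fibre_product X p) X fst"
  unfolding fibre_product_def by (intro continuous_map_from_subtopology continuous_map_fst)

lemma continuous_map_fibre_product_snd: "continuous_map (fibre_product X p) X snd"
  unfolding fibre_product_def by (intro continuous_map_from_subtopology continuous_map_snd)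

locale diagonal_cylinder_retraction =
  fixes X :: "'a topology" and p :: "'a \<Rightarrow> 'b" and R :: "('a \<times> 'a) \<times> real \<Rightarrow> ('a \<times> 'a) \<times> real"
  assumes R_cont: "continuous_map (prod_topology (fibre_product X p) II) (prod_topology (fibre_product X p) II) R"
    and R_bottom: "\<And>z. z \<in> topspace (fibre_product X p) \<Longrightarrow> R (z,0) = (z,0)"
    and R_diagonal: "\<And>x t. x \<in> topspace X \<Longrightarrow> t \<in> {0..1} \<Longrightarrow> R ((x,x),t) = ((x,x),t)"
    and R_pos: "\<And>z t. z \<in> topspace (fibre_product X p) \<Longrightarrow> t \<in> {0..1} \<Longrightarrow> 0 < snd (R (z,t)) \<Longrightarrow>
        fst (fst (R (z,t))) = snd (fst (R (z,t)))"
    and R_fibre: "\<And>z t. z \<in> topspace (fibre_product X p) \<Longrightarrow> t \<in> {0..1} \<Longrightarrow>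
        p (fst (fst (R (z,t)))) = p (fst z)"

lemma (in diagonal_cylinder_retraction) R_in_cylinder:
  assumes "z \<in> topspace (fibre_product X p)" "t \<in> {0..1}"
  shows "fst (R (z,t)) \<in> topspace (fibre_product X p) \<and> snd (R (z,t)) \<in> {0..1}"
proof -
  have "(z,t) \<in> topspace (prod_topology (fibre_product X p) II)" using assms by simp
  then have "R (z,t) \<in> topspace (prod_topology (fibre_product X p) II)"
    using continuous_map_image_subset_topspace[OF R_cont] by blast
  then show ?thesis by (cases "R (z,t)") auto
qed

lemma diagonal_cylinder_retractionI:
  fixes X :: "'a topology" and p :: "'a \<Rightarrow> 'b"
  defines "E \<equiv> subtopology (prod_topology (fibre_product X p) II) {(z,t). fst z = snd z \<or> t = 0}"
  assumes R: "continuous_map (prod_topology (fibre_product X p) II) E R"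
    and R_fibre: "\<And>z t. z \<in> topspace (fibre_product X p) \<Longrightarrow> t \<in> {0..1} \<Longrightarrow>
        p (fst (fst (R (z,t)))) = p (fst z)"
    and R_bottom: "\<And>z. z \<in> topspace (fibre_product X p) \<Longrightarrow> R (z,0) = (z,0)"
    and R_diagonal: "\<And>x t. x \<in> topspace X \<Longrightarrow> t \<in> {0..1} \<Longrightarrow> R ((x,x),t) = ((x,x),t)"
  shows "diagonal_cylinder_retraction X p R"
proof unfold_locales
  show "continuous_map (prod_topology (fibre_product X p) II) (prod_topology (fibre_product X p) II) R"
    using R by (simp add: E_def continuous_map_in_subtopology)
  show "R (z,0) = (z,0)" if "z \<in> topspace (fibre_product X p)" for z
    using R_bottom that .
  show "R ((x,x),t) = ((x,x),t)" if "x \<in> topspace X" "t \<in> {0..1}" for x t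
    using R_diagonal that .
  fix z t assume zt: "z \<in> topspace (fibre_product X p)" "t \<in> {0..1::real}"
  then show "p (fst (fst (R (z,t)))) = p (fst z)"
    by (rule R_fibre)
  have "(z,t) \<in> topspace (prod_topology (fibre_product X p) II)"
    using zt by simp
  then have "R (z,t) \<in> topspace E"
    using continuous_map_image_subset_topspace[OF R] by blast
  then show "0 < snd (R (z,t)) \<Longrightarrow> fst (fst (R (z,t))) = snd (fst (R (z,t)))"
    by (auto simp: E_def case_prod_unfold)
qed

lemma fibrewise_LEC_diagonal_cylinder_retraction:
  fixes X :: "'a topology" and p :: "'a \<Rightarrow> 'b" and B :: "'b topology"
  assumes "fibrewise_LEC B X p"
  obtains R where "diagonal_cylinder_retraction X p R"
proof -
  let ?XB = "fibre_product X p"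
  let ?E = "subtopology (prod_topology ?XB II) {(z,t). fst z = snd z \<or> t = 0}"
  let ?q = "\<lambda>((x,y),t). p x"
  have cof: "fibrewise_cofibration TYPE(('a \<times> 'a) \<times> real) B X p ?XB (\<lambda>(x,y). p x) (\<lambda>x. (x,x))"
    using assms by (simp add: fibrewise_LEC_def closed_fibrewise_cofibration_def)
  have "continuous_map X B p"
    using assms by (simp add: fibrewise_LEC_def fibrewise_space_def)
  then have "continuous_map (prod_topology ?XB II) B (\<lambda>u. p (fst (fst u)))"
    using continuous_map_comp[OF continuous_map_fst continuous_map_fibre_product_fst]
    by (rule continuous_map_comp[rotated])
  then have E_space: "fibrewise_space B ?E ?q"
    by (auto simp: fibrewise_space_def case_prod_unfold intro: continuous_map_from_subtopology)
  have "continuous_map ?XB (prod_topology ?XB II) (\<lambda>z. (z,0))"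
    by (simp add: continuous_map_pairedI)
  then have bottom: "fibrewise_map ?XB (\<lambda>(x,y). p x) ?E ?q (\<lambda>z. (z,0))"
    by (auto simp: fibrewise_map_def continuous_map_in_subtopology)
  have "continuous_map (prod_topology X II) ?XB (\<lambda>u. (fst u, fst u))"
    unfolding fibre_product_def continuous_map_in_subtopology
    using continuous_map_pairedI[OF continuous_map_fst continuous_map_fst] by auto
  then have "continuous_map (prod_topology X II) (prod_topology ?XB II) (\<lambda>(x,t). ((x,x),t))"
    unfolding case_prod_unfold by (rule continuous_map_pairedI[OF _ continuous_map_snd])
  then have diagonal: "fibrewise_map (prod_topology X II) (\<lambda>(a,t). p a) ?E ?q (\<lambda>(x,t). ((x,x),t))"
    by (auto simp: fibrewise_map_def continuous_map_in_subtopology)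
  obtain R where R: "fibrewise_map (prod_topology ?XB II) (\<lambda>(z,t). (\<lambda>(x,y). p x) z) ?E ?q R"
      "\<And>z. z \<in> topspace ?XB \<Longrightarrow> R (z,0) = (z,0)"
      "\<And>x t. x \<in> topspace X \<Longrightarrow> t \<in> {0..1} \<Longrightarrow> R ((x,x),t) = ((x,x),t)"
    using cof[unfolded fibrewise_cofibration_def, THEN conjunct2, rule_format,
        of ?E ?q "\<lambda>z. (z,0)" "\<lambda>(x,t). ((x,x),t)"] E_space bottom diagonal
    by fastforce
  show ?thesis
  proof (rule that, rule diagonal_cylinder_retractionI)
    show "continuous_map (prod_topology ?XB II) ?E R"
      using R(1) by (simp add: fibrewise_map_def)
    show "p (fst (fst (R (z,t)))) = p (fst z)" if "z \<in> topspace ?XB" "t \<in> {0..1}" for z t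
      using R(1) that unfolding fibrewise_map_def by (auto simp: case_prod_unfold)
  qed (fact R(2), fact R(3))
qed

locale LEC_retract_setting = diagonal_cylinder_retraction X p R
  for X :: "'a topology" and p :: "'a \<Rightarrow> 'b" and R :: "('a \<times> 'a) \<times> real \<Rightarrow> ('a \<times> 'a) \<times> real" +
  fixes f :: "'a \<Rightarrow> real" and r :: "'a \<Rightarrow> 'a"
  assumes f_cont: "continuous_map X euclideanreal f"
    and f_range: "\<And>x. x \<in> topspace X \<Longrightarrow> 0 \<le> f x \<and> f x \<le> 1"
    and r_cont: "continuous_map (subtopology X {x \<in> topspace X. f x < 1}) X r"
    and r_into: "\<And>x. x \<in> topspace X \<Longrightarrow> f x < 1 \<Longrightarrow> r x \<in> topspace X \<and> f (r x) = 0 \<and> p (r x) = p x"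
    and r_id: "\<And>x. x \<in> topspace X \<Longrightarrow> f x = 0 \<Longrightarrow> r x = x"
begin

abbreviation "XB \<equiv> fibre_product X p"

definition "U = {x \<in> topspace X. f x < 1}"
definition "A = {x \<in> topspace X. f x = 0}"
definition "s x = (x, r x)"

text \<open>For \<open>x \<in> V\<close> the point \<open>R (s x, 1)\<close> lies on the diagonal, so the two coordinates of
  \<open>R (s x, -)\<close> are paths from \<open>x\<close> and from \<open>r x\<close> meeting at time 1; \<open>\<gamma>\<close> runs along the
  first and back along the second.\<close>

definition "V = {x \<in> U. 0 < snd (R (s x, 1))}"

definition "\<gamma> u = (if snd u \<le> 1/2 then fst (fst (R (s (fst u), 2 * snd u)))
                    else snd (fst (R (s (fst u), 2 - 2 * snd u))))"

lemma U_open: "openin X U"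
  using openin_continuous_map_preimage[OF f_cont, of "{..<1}"] by (simp add: U_def)

lemma A_subset_U: "A \<subseteq> U"
  by (auto simp: A_def U_def)

lemma A_closed: "closedin X A"
  using closedin_continuous_map_preimage[OF f_cont, of "{0}"] by (simp add: A_def)

lemma s_cont: "continuous_map (subtopology X U) XB s"
proof -
  have "continuous_map (subtopology X U) (prod_topology X X) (\<lambda>x. (x, r x))"
    using r_cont by (intro continuous_map_pairedI) (auto simp: U_def)
  moreover have "(x, r x) \<in> {(x,y). p x = p y}" if "x \<in> topspace (subtopology X U)" for x
    using that r_into by (auto simp: U_def)
  ultimately show ?thesis
    unfolding fibre_product_def s_def continuous_map_in_subtopology by blast
qed

lemma s_in_fibre_product: "x \<in> U \<Longrightarrow> s x \<in> topspace XB"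
  using r_into by (auto simp: U_def s_def topspace_fibre_product)

lemma s_A: "a \<in> A \<Longrightarrow> s a = (a,a)"
  using r_id by (auto simp: A_def s_def)

lemma R_s_cont:
  assumes "continuous_map P (subtopology X U) \<phi>" "continuous_map P euclideanreal \<tau>"
    and "\<And>u. u \<in> topspace P \<Longrightarrow> \<tau> u \<in> {0..1}"
  shows "continuous_map P (prod_topology XB II) (\<lambda>u. R (s (\<phi> u), \<tau> u))"
proof -
  have "continuous_map P XB (\<lambda>u. s (\<phi> u))"
    using assms(1) s_cont by (rule continuous_map_comp)
  moreover have "continuous_map P II \<tau>"
    using assms(2,3) by (simp add: continuous_map_in_subtopology)
  ultimately have "continuous_map P (prod_topology XB II) (\<lambda>u. (s (\<phi> u), \<tau> u))"
    by (rule continuous_map_pairedI)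
  then show ?thesis
    using R_cont by (rule continuous_map_comp)
qed

lemma V_subset_U: "V \<subseteq> U"
  by (auto simp: V_def)

lemma A_subset_V: "A \<subseteq> V"
proof
  fix a assume "a \<in> A"
  moreover have "a \<in> topspace X" using \<open>a \<in> A\<close> by (simp add: A_def)
  ultimately show "a \<in> V"
    using A_subset_U R_diagonal[of a 1] by (auto simp: V_def s_A)
qed

lemma V_open: "openin X V"
proof -
  have "continuous_map (subtopology X U) (prod_topology XB II) (\<lambda>x. R (s x, 1))"
    by (rule R_s_cont[where \<phi> = "\<lambda>x. x"]) simp_all
  then have "continuous_map (subtopology X U) II (\<lambda>x. snd (R (s x, 1)))"
    using continuous_map_snd by (rule continuous_map_comp)
  then have "continuous_map (subtopology X U) euclideanreal (\<lambda>x. snd (R (s x, 1)))"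
    by (rule continuous_map_into_fulltopology)
  then have "openin (subtopology X U) {x \<in> topspace (subtopology X U). snd (R (s x, 1)) \<in> {0<..}}"
    by (rule openin_continuous_map_preimage) simp
  moreover have "{x \<in> topspace (subtopology X U). snd (R (s x, 1)) \<in> {0<..}} = V"
    unfolding V_def U_def topspace_subtopology by blast
  ultimately have "openin (subtopology X U) V"
    by (simp only:)
  then show ?thesis
    using U_open by (rule openin_trans_full)
qed

lemma R_s_cont_on_V:
  assumes "T \<subseteq> V \<times> UNIV"
    and "continuous_map (subtopology (prod_topology X II) T) euclideanreal \<tau>"
    and "\<And>u. u \<in> topspace (subtopology (prod_topology X II) T) \<Longrightarrow> \<tau> u \<in> {0..1}"
  shows "continuous_map (subtopology (prod_topology X II) T) (prod_topology XB II) (\<lambda>u. R (s (fst u), \<tau> u))"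
proof (rule R_s_cont[OF _ assms(2,3)])
  show "continuous_map (subtopology (prod_topology X II) T) (subtopology X U) fst"
    using assms(1) V_subset_U by (intro continuous_map_subtopology_fst_into) auto
qed

lemma gamma_cont: "continuous_map (subtopology (prod_topology X II) (V \<times> {0..1})) X \<gamma>"
proof -
  let ?Z = "subtopology (prod_topology X II) (V \<times> {0..1})"
  have "continuous_map ?Z X (\<lambda>u. if snd u \<le> 1/2 then fst (fst (R (s (fst u), 2 * snd u)))
                                 else snd (fst (R (s (fst u), 2 - 2 * snd u))))"
  proof (rule continuous_map_cases_le)
    show "continuous_map ?Z euclideanreal snd"
      by (rule continuous_map_subtopology_snd_real)
    let ?S1 = "V \<times> {0..1} \<inter> {u \<in> topspace ?Z. snd u \<le> 1/2}"
    have "continuous_map (subtopology (prod_topology X II) ?S1) (prod_topology XB II)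
        (\<lambda>u. R (s (fst u), 2 * snd u))"
      by (rule R_s_cont_on_V) (auto intro!: continuous_intros continuous_map_subtopology_snd_real)
    then show "continuous_map (subtopology ?Z {u \<in> topspace ?Z. snd u \<le> 1/2}) X
        (\<lambda>u. fst (fst (R (s (fst u), 2 * snd u))))"
      unfolding subtopology_subtopology
      using continuous_map_comp[OF continuous_map_fst continuous_map_fibre_product_fst]
      by (rule continuous_map_comp)
    let ?S2 = "V \<times> {0..1} \<inter> {u \<in> topspace ?Z. 1/2 \<le> snd u}"
    have "continuous_map (subtopology (prod_topology X II) ?S2) (prod_topology XB II)
        (\<lambda>u. R (s (fst u), 2 - 2 * snd u))"
      by (rule R_s_cont_on_V) (auto intro!: continuous_intros continuous_map_subtopology_snd_real)
    then show "continuous_map (subtopology ?Z {u \<in> topspace ?Z. 1/2 \<le> snd u}) X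
        (\<lambda>u. snd (fst (R (s (fst u), 2 - 2 * snd u))))"
      unfolding subtopology_subtopology
      using continuous_map_comp[OF continuous_map_fst continuous_map_fibre_product_snd]
      by (rule continuous_map_comp)
    fix u assume u: "u \<in> topspace ?Z" "snd u = 1/2"
    then have "fst u \<in> V" by auto
    then have "fst (fst (R (s (fst u), 1))) = snd (fst (R (s (fst u), 1)))"
      using R_pos s_in_fibre_product V_subset_U by (auto simp: V_def)
    moreover have "2 * snd u = 1" "2 - 2 * snd u = 1"
      using u(2) by simp_all
    ultimately show "fst (fst (R (s (fst u), 2 * snd u))) = snd (fst (R (s (fst u), 2 - 2 * snd u)))"
      by (simp only:)
  qed simp
  then show ?thesis
    unfolding \<gamma>_def [abs_def] .
qed

lemma gamma_in_topspace: "x \<in> V \<Longrightarrow> t \<in> {0..1} \<Longrightarrow> \<gamma> (x,t) \<in> topspace X"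
  using continuous_map_image_subset_topspace[OF gamma_cont] V_open openin_subset by fastforce

lemma gamma_0: "x \<in> V \<Longrightarrow> \<gamma> (x,0) = x"
  using R_bottom[of "s x"] s_in_fibre_product V_subset_U by (auto simp: \<gamma>_def s_def)

lemma gamma_1: "x \<in> V \<Longrightarrow> \<gamma> (x,1) = r x"
  using R_bottom[of "s x"] s_in_fibre_product V_subset_U by (auto simp: \<gamma>_def s_def)

lemma gamma_A: "a \<in> A \<Longrightarrow> t \<in> {0..1} \<Longrightarrow> \<gamma> (a,t) = a"
  using R_diagonal[of a "2 * t"] R_diagonal[of a "2 - 2 * t"] by (auto simp: \<gamma>_def s_A A_def)

lemma gamma_fibre:
  assumes "x \<in> V" "t \<in> {0..1}"
  shows "p (\<gamma> (x,t)) = p x"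
proof -
  have sx: "s x \<in> topspace XB"
    using assms(1) V_subset_U s_in_fibre_product by auto
  show ?thesis
  proof (cases "t \<le> 1/2")
    case True
    then show ?thesis
      using assms(2) R_fibre[OF sx, of "2 * t"] by (simp add: \<gamma>_def s_def)
  next
    case False
    then have t': "2 - 2 * t \<in> {0..1}" using assms(2) by auto
    have "p (snd (fst (R (s x, 2 - 2 * t)))) = p (fst (fst (R (s x, 2 - 2 * t))))"
      using R_in_cylinder[OF sx t'] by (auto simp: topspace_fibre_product)
    then show ?thesis
      using False R_fibre[OF sx t'] by (simp add: \<gamma>_def s_def)
  qed
qed

text \<open>The factor \<open>1 - 2 f x\<close> makes \<open>\<kappa>\<close> vanish before \<open>x\<close> leaves \<open>U\<close>, the domain of \<open>r\<close>.\<close>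

definition "\<kappa> x = (if f x \<le> 1/2 then snd (R (s x, 1)) * (1 - 2 * f x) else 0)"

lemma kappa_cont: "continuous_map X euclideanreal \<kappa>"
proof -
  have "continuous_map X euclideanreal
      (\<lambda>x. if f x \<le> 1/2 then snd (R (s x, 1)) * (1 - 2 * f x) else 0)"
  proof (rule continuous_map_cases_le)
    let ?P = "subtopology X {x \<in> topspace X. f x \<le> 1/2}"
    have "continuous_map ?P (prod_topology XB II) (\<lambda>x. R (s x, 1))"
      by (rule R_s_cont[where \<phi> = "\<lambda>x. x"]) (auto simp: continuous_map_in_subtopology U_def)
    then have "continuous_map ?P II (\<lambda>x. snd (R (s x, 1)))"
      using continuous_map_snd by (rule continuous_map_comp)
    then show "continuous_map ?P euclideanreal (\<lambda>x. snd (R (s x, 1)) * (1 - 2 * f x))"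
      using continuous_map_from_subtopology[OF f_cont]
      by (intro continuous_intros) (auto dest: continuous_map_into_fulltopology)
  qed (use f_cont in auto)
  then show ?thesis
    unfolding \<kappa>_def [abs_def] .
qed

lemma kappa_range: "x \<in> topspace X \<Longrightarrow> 0 \<le> \<kappa> x \<and> \<kappa> x \<le> 1"
proof (cases "f x \<le> 1/2")
  case True
  assume x: "x \<in> topspace X"
  then have "snd (R (s x, 1)) \<in> {0..1}"
    using True R_in_cylinder s_in_fibre_product by (auto simp: U_def)
  then show ?thesis
    using True f_range[OF x] by (auto simp: \<kappa>_def intro!: mult_le_one)
qed (simp add: \<kappa>_def)

lemma kappa_A: "a \<in> A \<Longrightarrow> \<kappa> a = 1"
  using R_diagonal[of a 1] by (auto simp: \<kappa>_def s_A A_def)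

lemma V_if_kappa_pos:
  assumes "x \<in> topspace X" "0 < \<kappa> x"
  shows "x \<in> V"
proof -
  have f: "f x \<le> 1/2" and "0 < snd (R (s x, 1)) * (1 - 2 * f x)"
    using assms(2) by (auto simp: \<kappa>_def split: if_splits)
  then have "0 < snd (R (s x, 1))"
    by (simp add: zero_less_mult_iff)
  then show ?thesis
    using assms(1) f by (auto simp: V_def U_def)
qed

text \<open>\<open>\<psi>\<close> vanishes exactly on \<open>A\<close> because \<open>\<psi> \<ge> f\<close>, and \<open>\<psi> x < 1\<close> forces \<open>\<kappa> x > 1/2\<close>,
  hence \<open>\<beta> x = 1\<close>: after time \<open>\<psi> x\<close> the point \<open>x\<close> has been carried all the way to \<open>r x \<in> A\<close>.
  The cut-off \<open>\<beta>\<close> lets \<open>D\<close> pass continuously from the identity (where \<open>\<kappa> \<le> 1/4\<close>) to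
  the paths \<open>\<gamma>\<close>.\<close>

definition "\<psi> x = min 1 (max (f x) (2 * (1 - \<kappa> x)))"
definition "\<beta> x = min 1 (max 0 (4 * \<kappa> x - 1))"
definition "\<sigma> u = \<beta> (fst u) * min 1 (snd u / \<psi> (fst u))"
definition "D u = (if \<kappa> (fst u) \<le> 1/4 then fst u else \<gamma> (fst u, \<sigma> u))"

lemma psi_cont: "continuous_map X euclideanreal \<psi>"
  unfolding \<psi>_def [abs_def] using f_cont kappa_cont by (intro continuous_intros)

lemma beta_cont: "continuous_map X euclideanreal \<beta>"
  unfolding \<beta>_def [abs_def] using kappa_cont by (intro continuous_intros)

lemma psi_range: "x \<in> topspace X \<Longrightarrow> 0 \<le> \<psi> x \<and> \<psi> x \<le> 1"
  using f_range[of x] kappa_range[of x] by (auto simp: \<psi>_def)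

lemma psi_A: "a \<in> A \<Longrightarrow> \<psi> a = 0"
  using kappa_A[of a] by (auto simp: \<psi>_def A_def)

lemma A_if_psi_eq_0: "x \<in> topspace X \<Longrightarrow> \<psi> x = 0 \<Longrightarrow> x \<in> A"
  using f_range[of x] by (auto simp: \<psi>_def A_def min_def max_def split: if_splits)

lemma kappa_gt_half_if_psi_lt_1: "\<psi> x < 1 \<Longrightarrow> 1/2 < \<kappa> x"
  by (auto simp: \<psi>_def min_def max_def split: if_splits)

lemma sigma_range: "x \<in> topspace X \<Longrightarrow> t \<in> {0..1} \<Longrightarrow> \<sigma> (x,t) \<in> {0..1}"
  using psi_range[of x] by (auto simp: \<sigma>_def \<beta>_def intro!: mult_le_one)

lemma D_in_topspace: "x \<in> topspace X \<Longrightarrow> t \<in> {0..1} \<Longrightarrow> D (x,t) \<in> topspace X"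
  using gamma_in_topspace[OF V_if_kappa_pos sigma_range] by (auto simp: D_def)

lemma D_0: "x \<in> topspace X \<Longrightarrow> D (x,0) = x"
  using gamma_0[OF V_if_kappa_pos] by (auto simp: D_def \<sigma>_def)

lemma D_A: "a \<in> A \<Longrightarrow> t \<in> {0..1} \<Longrightarrow> D (a,t) = a"
  using gamma_A[OF _ sigma_range] kappa_A by (auto simp: D_def A_def)

lemma D_fibre: "x \<in> topspace X \<Longrightarrow> t \<in> {0..1} \<Longrightarrow> p (D (x,t)) = p x"
  using gamma_fibre[OF V_if_kappa_pos sigma_range] by (auto simp: D_def)

lemma D_into_A:
  assumes x: "x \<in> topspace X" and t: "t \<in> {0..1}" and "\<psi> x < t"
  shows "D (x,t) \<in> A"
proof (cases "\<psi> x = 0")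
  case True
  then show ?thesis
    using A_if_psi_eq_0[OF x True] D_A t by simp
next
  case False
  have \<kappa>: "1/2 < \<kappa> x"
    using assms(3) t by (intro kappa_gt_half_if_psi_lt_1) simp
  then have xV: "x \<in> V"
    using V_if_kappa_pos[OF x] by simp
  have "0 < \<psi> x"
    using False psi_range[OF x] by linarith
  then have "1 < t / \<psi> x"
    using assms(3) by simp
  moreover have "\<beta> x = 1"
    using \<kappa> by (simp add: \<beta>_def)
  ultimately have "\<sigma> (x,t) = 1"
    by (simp add: \<sigma>_def)
  then have "D (x,t) = r x"
    using \<kappa> gamma_1[OF xV] by (simp add: D_def)
  then show ?thesis
    using r_into xV V_subset_U by (auto simp: A_def U_def)
qed

lemma sigma_cont:
  assumes "\<And>u. u \<in> T \<Longrightarrow> 0 < \<psi> (fst u)"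
  shows "continuous_map (subtopology (prod_topology X II) T) euclideanreal \<sigma>"
proof -
  have "continuous_map (subtopology (prod_topology X II) T) euclideanreal
      (\<lambda>u. \<beta> (fst u) * min 1 (snd u / \<psi> (fst u)))"
  proof (intro continuous_map_real_mult continuous_map_real_min continuous_map_real_divide)
    show "continuous_map (subtopology (prod_topology X II) T) euclideanreal (\<lambda>u. \<beta> (fst u))"
      using continuous_map_subtopology_fst beta_cont by (rule continuous_map_comp)
    show "continuous_map (subtopology (prod_topology X II) T) euclideanreal (\<lambda>u. \<psi> (fst u))"
      using continuous_map_subtopology_fst psi_cont by (rule continuous_map_comp)
    show "continuous_map (subtopology (prod_topology X II) T) euclideanreal snd"
      by (rule continuous_map_subtopology_snd_real)
    show "\<psi> (fst u) \<noteq> 0" if "u \<in> topspace (subtopology (prod_topology X II) T)" for u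
      using that assms by fastforce
  qed simp
  then show ?thesis
    unfolding \<sigma>_def [abs_def] .
qed

lemma D_cont_on_psi_pos:
  "continuous_map (subtopology (prod_topology X II) {u \<in> topspace (prod_topology X II). 0 < \<psi> (fst u)}) X D"
proof -
  let ?O = "{u \<in> topspace (prod_topology X II). 0 < \<psi> (fst u)}"
  let ?Q = "subtopology (prod_topology X II) ?O"
  have "continuous_map ?Q X (\<lambda>u. if \<kappa> (fst u) \<le> 1/4 then fst u else \<gamma> (fst u, \<sigma> u))"
  proof (rule continuous_map_cases_le)
    show "continuous_map ?Q euclideanreal (\<lambda>u. \<kappa> (fst u))"
      using continuous_map_subtopology_fst kappa_cont by (rule continuous_map_comp)
    show "continuous_map (subtopology ?Q {u \<in> topspace ?Q. \<kappa> (fst u) \<le> 1/4}) X fst"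
      unfolding subtopology_subtopology by (rule continuous_map_subtopology_fst)
    let ?S = "?O \<inter> {u \<in> topspace ?Q. 1/4 \<le> \<kappa> (fst u)}"
    have "continuous_map (subtopology (prod_topology X II) ?S) euclideanreal \<sigma>"
      by (rule sigma_cont) auto
    then have "continuous_map (subtopology (prod_topology X II) ?S) (prod_topology X II) (\<lambda>u. (fst u, \<sigma> u))"
      using sigma_range by (intro continuous_map_pairedI continuous_map_subtopology_fst)
        (force simp: continuous_map_in_subtopology)
    moreover have "(fst u, \<sigma> u) \<in> V \<times> {0..1}" if "u \<in> topspace (subtopology (prod_topology X II) ?S)" for u
      using that V_if_kappa_pos sigma_range by force
    ultimately have "continuous_map (subtopology (prod_topology X II) ?S)
        (subtopology (prod_topology X II) (V \<times> {0..1})) (\<lambda>u. (fst u, \<sigma> u))"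
      by (auto simp: continuous_map_in_subtopology)
    then show "continuous_map (subtopology ?Q {u \<in> topspace ?Q. 1/4 \<le> \<kappa> (fst u)}) X (\<lambda>u. \<gamma> (fst u, \<sigma> u))"
      unfolding subtopology_subtopology using gamma_cont by (rule continuous_map_comp)
    fix u assume "u \<in> topspace ?Q" "\<kappa> (fst u) = 1/4"
    then show "fst u = \<gamma> (fst u, \<sigma> u)"
      using gamma_0 V_if_kappa_pos by (auto simp: \<sigma>_def \<beta>_def)
  qed simp
  then show ?thesis
    unfolding D_def [abs_def] .
qed

lemma gamma_tube:
  assumes a: "a \<in> A" and N: "openin X N" "a \<in> N"
  obtains W where "openin X W" "a \<in> W" "\<And>x t. x \<in> W \<Longrightarrow> t \<in> {0..1} \<Longrightarrow> \<gamma> (x,t) \<in> N"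
proof -
  have aX: "a \<in> topspace X"
    using a by (simp add: A_def)
  let ?W = "{w \<in> topspace (subtopology (prod_topology X II) (V \<times> {0..1})). \<gamma> w \<in> N}"
  have "openin (subtopology (prod_topology X II) (V \<times> {0..1})) ?W"
    using N by (intro openin_continuous_map_preimage[OF gamma_cont]) simp
  moreover have "openin (prod_topology X II) (V \<times> {0..1})"
    using V_open by (simp add: openin_prod_Times_iff)
  ultimately have W_open: "openin (prod_topology X II) ?W"
    by (rule openin_trans_full)
  have aW: "{a} \<times> {0..1} \<subseteq> ?W"
  proof
    fix w assume "w \<in> {a} \<times> {0..1::real}"
    then obtain t where w: "w = (a,t)" "t \<in> {0..1}" by auto
    have "a \<in> V"
      using a A_subset_V by blast
    then show "w \<in> ?W"
      using w aX N(2) gamma_A[OF a w(2)] by simp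
  qed
  have "compactin II {0..1}"
    by (simp add: compactin_subtopology)
  then obtain W V1 where W: "openin X W" "a \<in> W" "{0..1} \<subseteq> V1" "W \<times> V1 \<subseteq> ?W"
    using tube_lemma_right[OF W_open _ aX aW] by blast
  show ?thesis
    using that[OF W(1,2)] W(3,4) by blast
qed

lemma D_topcontinuous_at_A:
  assumes a: "a \<in> A" and t: "t \<in> {0..1}"
  shows "topcontinuous_at (prod_topology X II) X D (a,t)"
  unfolding topcontinuous_at_def
proof (intro conjI allI impI)
  have aX: "a \<in> topspace X"
    using a by (simp add: A_def)
  then show "(a,t) \<in> topspace (prod_topology X II)"
    using t by simp
  show "D \<in> topspace (prod_topology X II) \<rightarrow> topspace X"
    using D_in_topspace by auto
  fix N assume N: "openin X N \<and> D (a,t) \<in> N"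
  then obtain W where W: "openin X W" "a \<in> W" "\<And>x t. x \<in> W \<Longrightarrow> t \<in> {0..1} \<Longrightarrow> \<gamma> (x,t) \<in> N"
    using gamma_tube[OF a] D_A[OF a t] by metis
  let ?Q = "{u \<in> topspace (prod_topology X II). fst u \<in> W}
            \<inter> {u \<in> topspace (prod_topology X II). \<kappa> (fst u) \<in> {1/4<..}}"
  have "openin (prod_topology X II) ?Q"
  proof (rule openin_Int)
    show "openin (prod_topology X II) {u \<in> topspace (prod_topology X II). fst u \<in> W}"
      using continuous_map_fst W(1) by (rule openin_continuous_map_preimage)
    show "openin (prod_topology X II) {u \<in> topspace (prod_topology X II). \<kappa> (fst u) \<in> {1/4<..}}"
      using continuous_map_comp[OF continuous_map_fst kappa_cont] by (rule openin_continuous_map_preimage) simp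
  qed
  moreover have "(a,t) \<in> ?Q"
    using aX t W(2) kappa_A[OF a] by simp
  moreover have "D u \<in> N" if "u \<in> ?Q" for u
  proof -
    have u: "fst u \<in> topspace X" "snd u \<in> {0..1}" "fst u \<in> W" "1/4 < \<kappa> (fst u)"
      using that by auto
    then have "\<gamma> (fst u, \<sigma> u) \<in> N"
      using W(3) sigma_range[of "fst u" "snd u"] by simp
    then show ?thesis
      using u(4) by (simp add: D_def)
  qed
  ultimately show "\<exists>Q. openin (prod_topology X II) Q \<and> (a,t) \<in> Q \<and> (\<forall>u\<in>Q. D u \<in> N)"
    by blast
qed

lemma D_cont: "continuous_map (prod_topology X II) X D"
  unfolding continuous_map_eq_topcontinuous_at
proof
  fix z assume z: "z \<in> topspace (prod_topology X II)"
  then obtain x t where zxt: "z = (x,t)" "x \<in> topspace X" "t \<in> {0..1}"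
    by (cases z) auto
  show "topcontinuous_at (prod_topology X II) X D z"
  proof (cases "0 < \<psi> x")
    case True
    have "openin (prod_topology X II) {u \<in> topspace (prod_topology X II). \<psi> (fst u) \<in> {0<..}}"
      using continuous_map_comp[OF continuous_map_fst psi_cont] by (rule openin_continuous_map_preimage) simp
    then show ?thesis
      using True z zxt D_cont_on_psi_pos D_in_topspace
      by (intro topcontinuous_at_if_continuous_on_open) auto
  next
    case False
    then have "x \<in> A"
      using A_if_psi_eq_0 psi_range[of x] zxt by force
    then show ?thesis
      using D_topcontinuous_at_A zxt by simp
  qed
qed

lemma closed_fibrewise_cofibration_A:
  "closed_fibrewise_cofibration TYPE('e) B (subtopology X A) p X p id"
  using psi_range
  by (intro closed_fibrewise_cofibration_if_Strom_structure[OF A_closed psi_cont _ psi_A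
        D_cont D_0 D_A D_fibre D_into_A]) auto

end

theorem proposition4p6:
  fixes B :: "'b topology" and X :: "'a topology" and p :: "'a \<Rightarrow> 'b" and f :: "'a \<Rightarrow> real"
  assumes "fibrewise_LEC B X p"
    and "continuous_map X (top_of_set {0..1}) f"
    and "fibrewise_retract X p {x \<in> topspace X. f x = 0} {x \<in> topspace X. f x < 1}"
  shows "closed_fibrewise_cofibration TYPE('e) B (subtopology X {x \<in> topspace X. f x = 0}) p X p id"
proof -
  obtain R where R: "diagonal_cylinder_retraction X p R"
    using fibrewise_LEC_diagonal_cylinder_retraction[OF assms(1)] by blast
  obtain r where r: "fibrewise_map (subtopology X {x \<in> topspace X. f x < 1}) p
      (subtopology X {x \<in> topspace X. f x = 0}) p r" "\<And>x. x \<in> {x \<in> topspace X. f x = 0} \<Longrightarrow> r x = x"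
    using assms(3) unfolding fibrewise_retract_def by blast
  have "r x \<in> topspace X \<and> f (r x) = 0" if "x \<in> topspace X" "f x < 1" for x
    using continuous_map_image_subset_topspace[OF conjunct1[OF r(1)[unfolded fibrewise_map_def]]] that
    by auto
  then interpret LEC_retract_setting X p R f r
    using r assms(2) continuous_map_image_subset_topspace[OF assms(2)]
    by (intro LEC_retract_setting.intro[OF R] LEC_retract_setting_axioms.intro)
      (auto simp: fibrewise_map_def continuous_map_in_subtopology)
  show ?thesis
    using closed_fibrewise_cofibration_A by (simp add: A_def)
qed

end
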